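(* Let $X,Y$ be mm-spaces and $p\in[1,+\infty]$. Then for every $\kappa\in(0,1)$ and $\kappa'\in(0,1/2)$, $$\mathrm{OD}(X\times_p Y;-(\kappa+\kappa'))\le\mathrm{OD}(X;-\kappa)+2\,\mathrm{OD}(Y;-\kappa').$$
   Context: An mm-space is a triple $(X,d_X,m_X)$ with $(X,d_X)$ complete separable metric space and $m_X$ a Borel probability measure. For $p<\infty$, $F_p(s,t)=(s^p+t^p)^{1/p}$, $F_\infty(s,t)=\max\{s,t\}$; $X\times_pY:=(X\times Y,d_{F_p},m_X\otimes m_Y)$ with $d_{F_p}((x,y),(x',y'))=F_p(d_X(x,x'),d_Y(y,y'))$. Partial diameter: $\mathrm{PD}(X;\alpha)$ = infimum of $\operatorname{diam}A$ over Borel $A$ with $m_X(A)\ge\alpha$. Observable diameter: $\mathrm{OD}(X;-\kappa):=\sup_f\mathrm{PD}((\mathbb R,|\cdot|,f_*m_X);1-\kappa)$ over 1-Lipschitz $f\colon X\to\mathbb R$. *)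

theory Defs
  imports "HOL-Analysis.Analysis" "HOL-Probability.Probability"
begin

definition mm_space :: "'a set \<Rightarrow> ('a \<Rightarrow> 'a \<Rightarrow> real) \<Rightarrow> 'a measure \<Rightarrow> bool" where
  "mm_space S d m \<longleftrightarrow>
     Metric_space S d \<and> Metric_space.mcomplete S d \<and>
     separable_space (Metric_space.mtopology S d) \<and>
     space m = S \<and>
     sets m = sigma_sets S {U. openin (Metric_space.mtopology S d) U} \<and>
     prob_space m"

text \<open>Diameter of a set (extended, so unbounded sets have diameter \<open>\<infinity>\<close>).\<close>
definition mdiam :: "('a \<Rightarrow> 'a \<Rightarrow> real) \<Rightarrow> 'a set \<Rightarrow> ennreal" where
  "mdiam d A = (SUP x\<in>A. SUP y\<in>A. ennreal (d x y))"

definition partial_diam :: "('a \<Rightarrow> 'a \<Rightarrow> real) \<Rightarrow> 'a measure \<Rightarrow> real \<Rightarrow> ennreal" where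
  "partial_diam d m \<alpha> = (INF A\<in>{A \<in> sets m. measure m A \<ge> \<alpha>}. mdiam d A)"

definition obs_diam :: "'a set \<Rightarrow> ('a \<Rightarrow> 'a \<Rightarrow> real) \<Rightarrow> 'a measure \<Rightarrow> real \<Rightarrow> ennreal" where
  "obs_diam S d m \<kappa> =
     (SUP f\<in>{f :: 'a \<Rightarrow> real. \<forall>x\<in>S. \<forall>y\<in>S. \<bar>f x - f y\<bar> \<le> d x y}.
        partial_diam (\<lambda>s t. \<bar>s - t\<bar>) (distr m borel f) (1 - \<kappa>))"

definition Fp :: "ereal \<Rightarrow> real \<Rightarrow> real \<Rightarrow> real" where
  "Fp p s t = (if p = \<infinity> then max s t
               else (s powr real_of_ereal p + t powr real_of_ereal p) powr (1 / real_of_ereal p))"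

definition prod_dist_p :: "ereal \<Rightarrow> ('a \<Rightarrow> 'a \<Rightarrow> real) \<Rightarrow> ('b \<Rightarrow> 'b \<Rightarrow> real)
    \<Rightarrow> ('a \<times> 'b) \<Rightarrow> ('a \<times> 'b) \<Rightarrow> real" where
  "prod_dist_p p dX dY u v = Fp p (dX (fst u) (fst v)) (dY (snd u) (snd v))"

end

(* Let f be 1-Lipschitz on X \<times>_p Y. Since F_p(s, 0) = F_p(0, s) = s, f is 1-Lipschitz in each variable
   separately, and nothing more is used. Let g(x) be the lower median of the section f(x, \<cdot>). As
   1 - \<kappa>' > 1/2, an interval of length OD(Y; -\<kappa>') carrying mass 1 - \<kappa>' of the section must
   contain g(x), so f(x, \<cdot>) stays within OD(Y; -\<kappa>') of g(x) outside a set of measure \<kappa>'. Medians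
   of uniformly close functions are close, hence g is 1-Lipschitz on X and lies in an interval of length
   OD(X; -\<kappa>) outside a set of measure \<kappa>. By Fubini both events hold on a set of measure at least
   (1 - \<kappa>)(1 - \<kappa>') \<ge> 1 - \<kappa> - \<kappa>', on which f takes values in an interval of length
   OD(X; -\<kappa>) + 2 OD(Y; -\<kappa>'). *)

theory Submission
  imports Defs
begin

definition one_lipschitz_on :: "'a set \<Rightarrow> ('a \<Rightarrow> 'a \<Rightarrow> real) \<Rightarrow> ('a \<Rightarrow> real) \<Rightarrow> bool" where
  "one_lipschitz_on S d f \<longleftrightarrow> (\<forall>x\<in>S. \<forall>y\<in>S. \<bar>f x - f y\<bar> \<le> d x y)"

definition separately_one_lipschitz_on ::
    "'a set \<Rightarrow> ('a \<Rightarrow> 'a \<Rightarrow> real) \<Rightarrow> 'b set \<Rightarrow> ('b \<Rightarrow> 'b \<Rightarrow> real) \<Rightarrow> ('a \<times> 'b \<Rightarrow> real) \<Rightarrow> bool" where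
  "separately_one_lipschitz_on S dX T dY f \<longleftrightarrow>
     (\<forall>y\<in>T. one_lipschitz_on S dX (\<lambda>x. f (x, y))) \<and> (\<forall>x\<in>S. one_lipschitz_on T dY (\<lambda>y. f (x, y)))"

lemma mm_spaceD:
  assumes "mm_space S d m"
  shows mm_space_Metric_space: "Metric_space S d" and mm_space_space: "space m = S"
    and mm_space_sets: "sets m = sigma_sets S {U. openin (Metric_space.mtopology S d) U}"
    and mm_space_separable: "separable_space (Metric_space.mtopology S d)"
    and mm_space_prob_space: "prob_space m"
  using assms by (simp_all add: mm_space_def)

lemma one_lipschitz_onD: "one_lipschitz_on S d f \<Longrightarrow> x \<in> S \<Longrightarrow> y \<in> S \<Longrightarrow> \<bar>f x - f y\<bar> \<le> d x y"
  unfolding one_lipschitz_on_def by blast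

lemma Fp_zero:
  assumes "1 \<le> p" "0 \<le> s"
  shows Fp_zero_right: "Fp p s 0 = s" and Fp_zero_left: "Fp p 0 s = s"
proof -
  have "p \<noteq> \<infinity> \<Longrightarrow> 1 \<le> real_of_ereal p" using assms by (cases p) auto
  then show "Fp p s 0 = s" "Fp p 0 s = s" using assms by (auto simp: Fp_def powr_powr)
qed

lemma separately_one_lipschitz_on_prod_dist_p:
  assumes "Metric_space S dX" "Metric_space T dY" "1 \<le> p"
    and "one_lipschitz_on (S \<times> T) (prod_dist_p p dX dY) f"
  shows "separately_one_lipschitz_on S dX T dY f"
proof -
  interpret X: Metric_space S dX by fact
  interpret Y: Metric_space T dY by fact
  show ?thesis
    using assms(4)
    by (fastforce simp: separately_one_lipschitz_on_def one_lipschitz_on_def prod_dist_p_def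
        Fp_zero[OF \<open>1 \<le> p\<close>])
qed

lemma one_lipschitz_on_continuous_map:
  assumes "Metric_space S d" "one_lipschitz_on S d h"
  shows "continuous_map (Metric_space.mtopology S d) euclideanreal h"
proof -
  interpret Metric_space S d by fact
  have "continuous_map mtopology Met_TC.mtopology h"
    unfolding metric_continuous_map[OF Met_TC.Metric_space_axioms]
    using assms(2) by (fastforce simp: one_lipschitz_on_def dist_real_def)
  then show ?thesis by simp
qed

lemma mm_space_borel_measurable:
  assumes "mm_space S d m" "continuous_map (Metric_space.mtopology S d) euclideanreal h"
  shows "h \<in> borel_measurable m"
proof (rule borel_measurableI)
  interpret Metric_space S d using assms(1) by (rule mm_space_Metric_space)
  fix U :: "real set" assume "open U"
  then have "openin mtopology {x \<in> S. h x \<in> U}"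
    using openin_continuous_map_preimage[OF assms(2)] by fastforce
  then show "h -` U \<inter> space m \<in> sets m"
    using mm_space_space[OF assms(1)] mm_space_sets[OF assms(1)]
    by (auto simp: vimage_def Int_def conj_commute)
qed

lemma mm_space_one_lipschitz_measurable:
  assumes "mm_space S d m" "one_lipschitz_on S d h"
  shows "h \<in> borel_measurable m"
  using mm_space_Metric_space[OF assms(1)] assms(2)
  by (intro mm_space_borel_measurable[OF assms(1)] one_lipschitz_on_continuous_map)

lemma mm_space_countable_dense:
  assumes "mm_space S d m"
  obtains D where "countable D" "D \<subseteq> S" "\<And>x e. x \<in> S \<Longrightarrow> 0 < e \<Longrightarrow> \<exists>q\<in>D. d x q < e"
proof -
  interpret Metric_space S d using assms by (rule mm_space_Metric_space)
  from mm_space_separable[OF assms] obtain D where D: "countable D" "D \<subseteq> S" "mtopology closure_of D = S"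
    unfolding separable_space_def by auto
  have dense: "\<exists>q\<in>D. d x q < e" if xe: "x \<in> S" "0 < e" for x e
  proof -
    have "x \<in> mtopology closure_of D" using D(3) xe(1) by simp
    then obtain q where "q \<in> D" "q \<in> mball x e" using xe(2) unfolding metric_closure_of by blast
    then show ?thesis by auto
  qed
  show ?thesis by (rule that[OF D(1,2) dense])
qed

lemma one_lipschitz_on_dist_left:
  assumes "Metric_space S d" "q \<in> S"
  shows "one_lipschitz_on S d (\<lambda>x. d x q)"
proof -
  interpret Metric_space S d by fact
  show ?thesis unfolding one_lipschitz_on_def
  proof (intro ballI)
    fix x y assume xy: "x \<in> S" "y \<in> S"
    have "d x q \<le> d x y + d y q" "d y q \<le> d y x + d x q" "d y x = d x y"
      using triangle[OF xy assms(2)] triangle[OF xy(2,1) assms(2)] commute by simp_all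
    then show "\<bar>d x q - d y q\<bar> \<le> d x y" by (simp add: abs_le_iff)
  qed
qed

lemma separately_one_lipschitz_on_dist_sum:
  assumes "separately_one_lipschitz_on S dX T dY f" "x \<in> S" "x' \<in> S" "y \<in> T" "y' \<in> T"
  shows "\<bar>f (x, y) - f (x', y')\<bar> \<le> dX x x' + dY y y'"
proof -
  have "one_lipschitz_on S dX (\<lambda>x. f (x, y))" "one_lipschitz_on T dY (\<lambda>y. f (x', y))"
    using assms unfolding separately_one_lipschitz_on_def by blast+
  from one_lipschitz_onD[OF this(1) assms(2,3)] one_lipschitz_onD[OF this(2) assms(4,5)]
  show ?thesis by linarith
qed

lemma separately_one_lipschitz_on_eq_INF:
  assumes "Metric_space S dX" "Metric_space T dY" and f: "separately_one_lipschitz_on S dX T dY f"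
    and DX: "DX \<subseteq> S" "\<And>x e. x \<in> S \<Longrightarrow> 0 < e \<Longrightarrow> \<exists>q\<in>DX. dX x q < e"
    and DY: "DY \<subseteq> T" "\<And>y e. y \<in> T \<Longrightarrow> 0 < e \<Longrightarrow> \<exists>r\<in>DY. dY y r < e"
    and xy: "x \<in> S" "y \<in> T"
  shows "(INF i\<in>DX \<times> DY. f i + dX x (fst i) + dY y (snd i)) = f (x, y)"
proof -
  interpret MX: Metric_space S dX by fact
  interpret MY: Metric_space T dY by fact
  define F where "F i = f i + dX x (fst i) + dY y (snd i)" for i
  have lower: "f (x, y) \<le> F i" if i: "i \<in> DX \<times> DY" for i
  proof -
    obtain q r where "i = (q, r)" "q \<in> S" "r \<in> T" using i DX DY by blast
    moreover have "\<bar>f (x, y) - f (q, r)\<bar> \<le> dX x q + dY y r"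
      using calculation xy by (intro separately_one_lipschitz_on_dist_sum[OF f])
    ultimately show ?thesis by (simp add: F_def)
  qed
  have approx: "c < f (x, y) + e" if c: "\<And>i. i \<in> DX \<times> DY \<Longrightarrow> c \<le> F i" and "0 < e" for c e
  proof -
    obtain q r where qr: "q \<in> DX" "dX x q < e / 4" "r \<in> DY" "dY y r < e / 4"
      using DX(2)[of x "e / 4"] DY(2)[of y "e / 4"] xy \<open>0 < e\<close> by auto
    then have "q \<in> S" "r \<in> T" using DX DY by auto
    then have "\<bar>f (q, r) - f (x, y)\<bar> \<le> dX q x + dY r y"
      using xy by (intro separately_one_lipschitz_on_dist_sum[OF f])
    moreover have "dX q x = dX x q" "dY r y = dY y r" using MX.commute MY.commute by auto
    moreover have "c \<le> F (q, r)" using c qr by simp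
    ultimately show ?thesis using qr by (simp add: F_def)
  qed
  have "Inf (F ` (DX \<times> DY)) = f (x, y)"
  proof (rule cInf_eq)
    fix v assume "v \<in> F ` (DX \<times> DY)"
    then obtain i where "v = F i" "i \<in> DX \<times> DY" by (rule imageE)
    then show "f (x, y) \<le> v" using lower by simp
  next
    fix c assume c: "\<And>v. v \<in> F ` (DX \<times> DY) \<Longrightarrow> c \<le> v"
    have ci: "c \<le> F i" if "i \<in> DX \<times> DY" for i using c[OF imageI[OF that]] .
    show "c \<le> f (x, y)"
    proof (rule field_le_epsilon)
      fix e :: real assume "0 < e"
      then show "c \<le> f (x, y) + e" using approx[OF ci \<open>0 < e\<close>] by simp
    qed
  qed
  then show ?thesis by (simp add: F_def)
qed

text \<open>The pair measure carries the product \<open>\<sigma>\<close>-algebra, so measurability is obtained from the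
  representation above as a countable infimum of measurable functions.\<close>
lemma separately_one_lipschitz_on_measurable:
  assumes X: "mm_space S dX mX" and Y: "mm_space T dY mY"
    and f: "separately_one_lipschitz_on S dX T dY f"
  shows "f \<in> borel_measurable (mX \<Otimes>\<^sub>M mY)"
proof -
  note MX = mm_space_Metric_space[OF X] and MY = mm_space_Metric_space[OF Y]
  obtain DX where DX: "countable DX" "DX \<subseteq> S" "\<And>x e. x \<in> S \<Longrightarrow> 0 < e \<Longrightarrow> \<exists>q\<in>DX. dX x q < e"
    using mm_space_countable_dense[OF X] by metis
  obtain DY where DY: "countable DY" "DY \<subseteq> T" "\<And>y e. y \<in> T \<Longrightarrow> 0 < e \<Longrightarrow> \<exists>r\<in>DY. dY y r < e"
    using mm_space_countable_dense[OF Y] by metis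
  define F where "F = (\<lambda>i z. f i + dX (fst z) (fst i) + dY (snd z) (snd i))"
  have "countable (DX \<times> DY)" using DX DY by simp
  moreover have "F i \<in> borel_measurable (mX \<Otimes>\<^sub>M mY)" if i: "i \<in> DX \<times> DY" for i
  proof -
    have "fst i \<in> S" "snd i \<in> T" using i DX DY by auto
    have [measurable]: "(\<lambda>x. dX x (fst i)) \<in> borel_measurable mX"
      using \<open>fst i \<in> S\<close> by (intro mm_space_one_lipschitz_measurable[OF X] one_lipschitz_on_dist_left[OF MX])
    have [measurable]: "(\<lambda>y. dY y (snd i)) \<in> borel_measurable mY"
      using \<open>snd i \<in> T\<close> by (intro mm_space_one_lipschitz_measurable[OF Y] one_lipschitz_on_dist_left[OF MY])
    show ?thesis unfolding F_def by measurable
  qed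
  ultimately have INF_meas: "(\<lambda>z. INF i\<in>DX \<times> DY. F i z) \<in> borel_measurable (mX \<Otimes>\<^sub>M mY)"
    by (rule borel_measurable_cINF_real)
  have eq: "f z = (INF i\<in>DX \<times> DY. F i z)" if z: "z \<in> space (mX \<Otimes>\<^sub>M mY)" for z
  proof -
    obtain x y where "z = (x, y)" "x \<in> S" "y \<in> T"
      using z by (auto simp: space_pair_measure mm_space_space[OF X] mm_space_space[OF Y])
    then show ?thesis
      unfolding F_def using separately_one_lipschitz_on_eq_INF[OF MX MY f DX(2,3) DY(2,3)] by simp
  qed
  show ?thesis using INF_meas by (simp only: measurable_cong[where f = f, OF eq])
qed

definition lower_median :: "real measure \<Rightarrow> real" where
  "lower_median M = Inf {t. 1/2 \<le> cdf M t}"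

context real_distribution
begin

lemma bdd_below_median_set: "bdd_below {t. 1/2 \<le> cdf M t}"
proof -
  have "eventually (\<lambda>t. cdf M t < 1/2) at_bot"
    using cdf_lim_at_bot by (rule order_tendstoD) simp
  then obtain b where "\<And>t. t \<le> b \<Longrightarrow> cdf M t < 1/2"
    by (auto simp: eventually_at_bot_linorder)
  then show ?thesis by (intro bdd_belowI[of _ b]) (metis linorder_not_le mem_Collect_eq nless_le)
qed

lemma median_set_nonempty: "{t. 1/2 \<le> cdf M t} \<noteq> {}"
proof -
  have "eventually (\<lambda>t. 1/2 < cdf M t) at_top"
    using cdf_lim_at_top_prob by (rule order_tendstoD) simp
  then obtain t where "1/2 < cdf M t" by (auto simp: eventually_at_top_linorder)
  then have "t \<in> {t. 1/2 \<le> cdf M t}" by simp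
  then show ?thesis by blast
qed

lemma lower_median_le: "1/2 \<le> cdf M t \<Longrightarrow> lower_median M \<le> t"
  unfolding lower_median_def using bdd_below_median_set by (intro cInf_lower) auto

lemma lower_median_ge: "(\<And>t. 1/2 \<le> cdf M t \<Longrightarrow> s \<le> t) \<Longrightarrow> s \<le> lower_median M"
  unfolding lower_median_def using median_set_nonempty by (intro cInf_greatest) auto

lemma lower_median_mem_interval:
  assumes "1/2 < measure M {u..v}"
  shows "lower_median M \<in> {u..v}"
proof -
  have "measure M {u..v} \<le> cdf M v" unfolding cdf_def by (intro finite_measure_mono) auto
  then have "lower_median M \<le> v" using assms by (intro lower_median_le) auto
  moreover have "u \<le> lower_median M"
  proof (rule lower_median_ge, rule ccontr)
    fix t assume t: "1/2 \<le> cdf M t" "\<not> u \<le> t"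
    then have "measure M ({..t} \<union> {u..v}) = cdf M t + measure M {u..v}"
      unfolding cdf_def by (intro finite_measure_Union) auto
    then show False using prob_le_1[of "{..t} \<union> {u..v}"] t assms by linarith
  qed
  ultimately show ?thesis by simp
qed

lemma partial_diam_less_imp_interval:
  assumes "partial_diam (\<lambda>s t. \<bar>s - t\<bar>) M \<alpha> < ennreal D" "0 < \<alpha>"
  obtains l where "\<alpha> \<le> measure M {l..l + D}"
proof -
  obtain A where A: "A \<in> sets M" "\<alpha> \<le> measure M A" "mdiam (\<lambda>s t. \<bar>s - t\<bar>) A < ennreal D"
    using assms(1) unfolding partial_diam_def INF_less_iff by auto
  have close: "\<bar>x - y\<bar> \<le> D" if "x \<in> A" "y \<in> A" for x y
  proof -
    have "ennreal \<bar>x - y\<bar> \<le> mdiam (\<lambda>s t. \<bar>s - t\<bar>) A"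
      unfolding mdiam_def using that by (intro SUP_upper2[of x] SUP_upper2[of y]) auto
    then have "ennreal \<bar>x - y\<bar> < ennreal D" using A(3) by (rule le_less_trans)
    then show ?thesis by (simp add: ennreal_less_iff)
  qed
  have "A \<noteq> {}" using A assms(2) by auto
  then obtain x0 where "x0 \<in> A" by blast
  then have bdd: "bdd_below A" using close by (intro bdd_belowI[of _ "x0 - D"]) (force simp: abs_le_iff)
  have "A \<subseteq> {Inf A..Inf A + D}"
  proof
    fix x assume x: "x \<in> A"
    have "x - D \<le> y" if "y \<in> A" for y using close[OF x that] by (simp add: abs_le_iff)
    then have "x - D \<le> Inf A" using \<open>A \<noteq> {}\<close> by (intro cInf_greatest)
    then show "x \<in> {Inf A..Inf A + D}" using cInf_lower[OF x bdd] by simp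
  qed
  then have "measure M A \<le> measure M {Inf A..Inf A + D}" by (intro finite_measure_mono) auto
  then show ?thesis using order_trans[OF A(2)] that by blast
qed

end

lemma lower_median_le_shift:
  assumes "real_distribution M" "real_distribution N" "\<And>t. cdf M t \<le> cdf N (t + \<delta>)"
  shows "lower_median N \<le> lower_median M + \<delta>"
proof -
  interpret M: real_distribution M by fact
  interpret N: real_distribution N by fact
  have "lower_median N - \<delta> \<le> t" if "1/2 \<le> cdf M t" for t
    using N.lower_median_le[of "t + \<delta>"] assms(3)[of t] that by linarith
  then have "lower_median N - \<delta> \<le> lower_median M" by (rule M.lower_median_ge)
  then show ?thesis by simp
qed

lemma (in prob_space) cdf_distr:
  "h \<in> borel_measurable M \<Longrightarrow> cdf (distr M borel h) t = prob {x \<in> space M. h x \<le> t}"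
  unfolding cdf_def by (subst measure_distr) (auto simp: vimage_def Int_def conj_commute)

lemma (in prob_space) lower_median_distr_lipschitz:
  assumes "h \<in> borel_measurable M" "h' \<in> borel_measurable M"
    and "\<And>x. x \<in> space M \<Longrightarrow> \<bar>h x - h' x\<bar> \<le> \<delta>"
  shows "\<bar>lower_median (distr M borel h) - lower_median (distr M borel h')\<bar> \<le> \<delta>"
proof -
  have shift: "lower_median (distr M borel g') \<le> lower_median (distr M borel g) + \<delta>"
    if [measurable]: "g \<in> borel_measurable M" "g' \<in> borel_measurable M"
      and le: "\<And>x. x \<in> space M \<Longrightarrow> g' x \<le> g x + \<delta>" for g g'
  proof (rule lower_median_le_shift)
    show "real_distribution (distr M borel g)" "real_distribution (distr M borel g')"
      using that(1,2) by simp_all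
    fix t
    have "prob {x \<in> space M. g x \<le> t} \<le> prob {x \<in> space M. g' x \<le> t + \<delta>}"
      using le by (intro finite_measure_mono) (fastforce, measurable)
    then show "cdf (distr M borel g) t \<le> cdf (distr M borel g') (t + \<delta>)" by (simp add: cdf_distr)
  qed
  have "h' x \<le> h x + \<delta>" "h x \<le> h' x + \<delta>" if "x \<in> space M" for x
    using assms(3)[OF that] by (simp_all add: abs_le_iff)
  then have "lower_median (distr M borel h') \<le> lower_median (distr M borel h) + \<delta>"
    "lower_median (distr M borel h) \<le> lower_median (distr M borel h') + \<delta>"
    using shift[OF assms(1,2)] shift[OF assms(2,1)] by blast+
  then show ?thesis by (simp add: abs_le_iff)
qed

lemma partial_diam_le_interval:
  assumes "{lo..hi} \<in> sets M" "\<alpha> \<le> measure M {lo..hi}"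
  shows "partial_diam (\<lambda>s t. \<bar>s - t\<bar>) M \<alpha> \<le> ennreal (hi - lo)"
proof -
  have "mdiam (\<lambda>s t. \<bar>s - t\<bar>) {lo..hi::real} \<le> ennreal (hi - lo)"
    unfolding mdiam_def by (intro SUP_least ennreal_leI) auto
  then show ?thesis unfolding partial_diam_def using assms by (intro INF_lower2) auto
qed

lemma partial_diam_le_obs_diam:
  "one_lipschitz_on S d f \<Longrightarrow> partial_diam (\<lambda>s t. \<bar>s - t\<bar>) (distr m borel f) (1 - \<kappa>) \<le> obs_diam S d m \<kappa>"
  unfolding obs_diam_def one_lipschitz_on_def by (intro SUP_upper) auto

lemma obs_diam_leI:
  "(\<And>f. one_lipschitz_on S d f \<Longrightarrow> partial_diam (\<lambda>s t. \<bar>s - t\<bar>) (distr m borel f) (1 - \<kappa>) \<le> B)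
    \<Longrightarrow> obs_diam S d m \<kappa> \<le> B"
  unfolding obs_diam_def one_lipschitz_on_def by (intro SUP_least) auto

lemma obs_diam_less_imp_concentration:
  assumes "mm_space S d m" "one_lipschitz_on S d h" "obs_diam S d m \<kappa> < ennreal D" "\<kappa> < 1"
  shows "\<exists>l. 1 - \<kappa> \<le> measure m (h -` {l..l + D} \<inter> space m)"
proof -
  interpret prob_space m using assms(1) by (rule mm_space_prob_space)
  have h: "h \<in> borel_measurable m" using assms(1,2) by (rule mm_space_one_lipschitz_measurable)
  have "partial_diam (\<lambda>s t. \<bar>s - t\<bar>) (distr m borel h) (1 - \<kappa>) < ennreal D"
    using partial_diam_le_obs_diam[OF assms(2)] assms(3) by (rule le_less_trans)
  moreover have "0 < 1 - \<kappa>" using assms(4) by simp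
  ultimately obtain l where "1 - \<kappa> \<le> measure (distr m borel h) {l..l + D}"
    by (rule real_distribution.partial_diam_less_imp_interval[OF real_distribution_distr[OF h]])
  then show ?thesis using h by (auto simp: measure_distr)
qed

text \<open>Since \<open>1 - \<kappa> > 1/2\<close>, the interval on which \<open>h\<close> concentrates contains the median.\<close>
lemma median_concentration:
  assumes "mm_space T d m" "one_lipschitz_on T d h" "obs_diam T d m \<kappa> < ennreal D" "\<kappa> < 1/2"
  shows "1 - \<kappa> \<le> measure m {y \<in> space m. \<bar>h y - lower_median (distr m borel h)\<bar> \<le> D}"
proof -
  interpret prob_space m using assms(1) by (rule mm_space_prob_space)
  have h [measurable]: "h \<in> borel_measurable m" using assms(1,2) by (rule mm_space_one_lipschitz_measurable)
  obtain u where u: "1 - \<kappa> \<le> measure m (h -` {u..u + D} \<inter> space m)"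
    using obs_diam_less_imp_concentration[OF assms(1-3)] assms(4) by force
  have "lower_median (distr m borel h) \<in> {u..u + D}"
    using u assms(4) by (intro real_distribution.lower_median_mem_interval) (auto simp: measure_distr)
  then have "h -` {u..u + D} \<inter> space m \<subseteq> {y \<in> space m. \<bar>h y - lower_median (distr m borel h)\<bar> \<le> D}"
    by (auto simp: abs_le_iff)
  then have "measure m (h -` {u..u + D} \<inter> space m)
      \<le> measure m {y \<in> space m. \<bar>h y - lower_median (distr m borel h)\<bar> \<le> D}"
    by (intro finite_measure_mono) measurable
  then show ?thesis using u by linarith
qed

lemma measure_pair_measure_ge:
  assumes "finite_measure M" "finite_measure N" "E \<in> sets (M \<Otimes>\<^sub>M N)" "G \<in> sets M" "0 \<le> \<beta>"
    and "\<And>x. x \<in> G \<Longrightarrow> \<beta> \<le> measure N (Pair x -` E)"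
  shows "measure M G * \<beta> \<le> measure (M \<Otimes>\<^sub>M N) E"
proof -
  interpret M: finite_measure M by fact
  interpret N: finite_measure N by fact
  interpret MN: finite_measure "M \<Otimes>\<^sub>M N" using assms(2,1) by (rule finite_measure_pair_measure)
  have "ennreal (measure M G * \<beta>) = (\<integral>\<^sup>+x. ennreal \<beta> * indicator G x \<partial>M)"
    using assms(4,5) by (simp add: nn_integral_cmult_indicator M.emeasure_eq_measure ennreal_mult mult.commute)
  also have "\<dots> \<le> (\<integral>\<^sup>+x. emeasure N (Pair x -` E) \<partial>M)"
    using assms(3,6) by (intro nn_integral_mono) (auto simp: N.emeasure_eq_measure split: split_indicator)
  also have "\<dots> = emeasure (M \<Otimes>\<^sub>M N) E"
    using assms(3) by (rule N.emeasure_pair_measure_alt[symmetric])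
  finally show ?thesis
    using assms(5) by (simp add: MN.emeasure_eq_measure)
qed

lemma one_lipschitz_on_section_median:
  assumes Y: "mm_space T dY mY" and f: "separately_one_lipschitz_on S dX T dY f"
  shows "one_lipschitz_on S dX (\<lambda>x. lower_median (distr mY borel (\<lambda>y. f (x, y))))"
  unfolding one_lipschitz_on_def
proof (intro ballI)
  interpret prob_space mY using Y by (rule mm_space_prob_space)
  fix x x' assume xx': "x \<in> S" "x' \<in> S"
  have lip: "one_lipschitz_on T dY (\<lambda>y. f (x, y))" "one_lipschitz_on T dY (\<lambda>y. f (x', y))"
    using f xx' by (simp_all add: separately_one_lipschitz_on_def)
  have "(\<lambda>y. f (x, y)) \<in> borel_measurable mY" by (rule mm_space_one_lipschitz_measurable[OF Y lip(1)])
  moreover have "(\<lambda>y. f (x', y)) \<in> borel_measurable mY" by (rule mm_space_one_lipschitz_measurable[OF Y lip(2)])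
  moreover have "\<bar>f (x, y) - f (x', y)\<bar> \<le> dX x x'" if "y \<in> space mY" for y
  proof -
    have "y \<in> T" using that mm_space_space[OF Y] by simp
    then have "one_lipschitz_on S dX (\<lambda>x. f (x, y))" using f by (simp add: separately_one_lipschitz_on_def)
    from one_lipschitz_onD[OF this xx'] show ?thesis .
  qed
  ultimately show "\<bar>lower_median (distr mY borel (\<lambda>y. f (x, y))) - lower_median (distr mY borel (\<lambda>y. f (x', y)))\<bar>
      \<le> dX x x'"
    by (rule lower_median_distr_lipschitz)
qed

lemma partial_diam_product_le:
  assumes X: "mm_space S dX mX" and Y: "mm_space T dY mY"
    and \<kappa>: "0 \<le> \<kappa>" "\<kappa> < 1" and \<kappa>': "0 \<le> \<kappa>'" "\<kappa>' < 1/2"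
    and a: "obs_diam S dX mX \<kappa> < ennreal a" and b: "obs_diam T dY mY \<kappa>' < ennreal b"
    and f: "separately_one_lipschitz_on S dX T dY f"
  shows "partial_diam (\<lambda>s t. \<bar>s - t\<bar>) (distr (mX \<Otimes>\<^sub>M mY) borel f) (1 - (\<kappa> + \<kappa>'))
           \<le> ennreal (a + 2 * b)"
proof -
  interpret PX: prob_space mX using X by (rule mm_space_prob_space)
  interpret PY: prob_space mY using Y by (rule mm_space_prob_space)
  interpret PXY: prob_space "mX \<Otimes>\<^sub>M mY" by (rule prob_space_pair) unfold_locales
  have f_meas [measurable]: "f \<in> borel_measurable (mX \<Otimes>\<^sub>M mY)"
    by (rule separately_one_lipschitz_on_measurable[OF X Y f])
  define g where "g x = lower_median (distr mY borel (\<lambda>y. f (x, y)))" for x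
  have g_lip: "one_lipschitz_on S dX g"
    unfolding g_def by (rule one_lipschitz_on_section_median[OF Y f])
  have g_meas [measurable]: "g \<in> borel_measurable mX"
    by (rule mm_space_one_lipschitz_measurable[OF X g_lip])
  obtain l where l: "1 - \<kappa> \<le> measure mX (g -` {l..l + a} \<inter> space mX)"
    using obs_diam_less_imp_concentration[OF X g_lip a \<kappa>(2)] ..
  define E where "E = {z \<in> space (mX \<Otimes>\<^sub>M mY). g (fst z) \<in> {l..l + a} \<and> \<bar>f z - g (fst z)\<bar> \<le> b}"
  have E_sets: "E \<in> sets (mX \<Otimes>\<^sub>M mY)" unfolding E_def by measurable
  have fiber: "1 - \<kappa>' \<le> measure mY (Pair x -` E)" if x: "x \<in> g -` {l..l + a} \<inter> space mX" for x
  proof -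
    have "x \<in> S" using x mm_space_space[OF X] by simp
    then have "one_lipschitz_on T dY (\<lambda>y. f (x, y))" using f by (simp add: separately_one_lipschitz_on_def)
    from median_concentration[OF Y this b \<kappa>'(2)]
    have near: "1 - \<kappa>' \<le> measure mY {y \<in> space mY. \<bar>f (x, y) - g x\<bar> \<le> b}"
      unfolding g_def .
    have "{y \<in> space mY. \<bar>f (x, y) - g x\<bar> \<le> b} \<subseteq> Pair x -` E"
      using x by (simp add: E_def space_pair_measure subset_eq)
    then have "measure mY {y \<in> space mY. \<bar>f (x, y) - g x\<bar> \<le> b} \<le> measure mY (Pair x -` E)"
      using sets_Pair1[OF E_sets] by (intro PY.finite_measure_mono)
    with near show ?thesis by linarith
  qed
  have "1 - (\<kappa> + \<kappa>') \<le> (1 - \<kappa>) * (1 - \<kappa>')"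
    using mult_nonneg_nonneg[OF \<kappa>(1) \<kappa>'(1)] by (simp add: algebra_simps)
  also have "\<dots> \<le> measure mX (g -` {l..l + a} \<inter> space mX) * (1 - \<kappa>')"
    using l \<kappa>'(2) by (intro mult_right_mono) simp_all
  also have "\<dots> \<le> measure (mX \<Otimes>\<^sub>M mY) E"
    using \<kappa>'(2) by (intro measure_pair_measure_ge[OF PX.finite_measure_axioms PY.finite_measure_axioms E_sets
        measurable_sets[OF g_meas atLeastAtMost_borel] _ fiber]) simp_all
  also have "\<dots> \<le> measure (mX \<Otimes>\<^sub>M mY) (f -` {l - b..l + a + b} \<inter> space (mX \<Otimes>\<^sub>M mY))"
  proof (rule PXY.finite_measure_mono)
    show "E \<subseteq> f -` {l - b..l + a + b} \<inter> space (mX \<Otimes>\<^sub>M mY)"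
      unfolding E_def by (auto simp: abs_le_iff)
  qed (rule measurable_sets[OF f_meas atLeastAtMost_borel])
  also have "\<dots> = measure (distr (mX \<Otimes>\<^sub>M mY) borel f) {l - b..l + a + b}"
    by (rule measure_distr[symmetric, OF f_meas atLeastAtMost_borel])
  finally have "1 - (\<kappa> + \<kappa>') \<le> measure (distr (mX \<Otimes>\<^sub>M mY) borel f) {l - b..l + a + b}" .
  then have "partial_diam (\<lambda>s t. \<bar>s - t\<bar>) (distr (mX \<Otimes>\<^sub>M mY) borel f) (1 - (\<kappa> + \<kappa>'))
      \<le> ennreal ((l + a + b) - (l - b))"
    by (intro partial_diam_le_interval) simp_all
  moreover have "(l + a + b) - (l - b) = a + 2 * b" by simp
  ultimately show ?thesis by simp
qed

lemma obs_diam_product_le: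
  assumes X: "mm_space S dX mX" and Y: "mm_space T dY mY" and "1 \<le> p"
    and "0 \<le> \<kappa>" "\<kappa> < 1" "0 \<le> \<kappa>'" "\<kappa>' < 1/2"
    and "obs_diam S dX mX \<kappa> < ennreal a" "obs_diam T dY mY \<kappa>' < ennreal b"
  shows "obs_diam (S \<times> T) (prod_dist_p p dX dY) (mX \<Otimes>\<^sub>M mY) (\<kappa> + \<kappa>') \<le> ennreal (a + 2 * b)"
proof (rule obs_diam_leI)
  fix f assume "one_lipschitz_on (S \<times> T) (prod_dist_p p dX dY) f"
  then have "separately_one_lipschitz_on S dX T dY f"
    by (rule separately_one_lipschitz_on_prod_dist_p[OF mm_space_Metric_space[OF X]
        mm_space_Metric_space[OF Y] \<open>1 \<le> p\<close>])
  then show "partial_diam (\<lambda>s t. \<bar>s - t\<bar>) (distr (mX \<Otimes>\<^sub>M mY) borel f) (1 - (\<kappa> + \<kappa>'))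
      \<le> ennreal (a + 2 * b)"
    by (rule partial_diam_product_le[OF X Y assms(4-9)])
qed

theorem mainTheorem8:
  fixes S :: "'a set" and dX :: "'a \<Rightarrow> 'a \<Rightarrow> real" and mX :: "'a measure"
    and T :: "'b set" and dY :: "'b \<Rightarrow> 'b \<Rightarrow> real" and mY :: "'b measure"
    and p :: ereal and \<kappa> \<kappa>' :: real
  assumes "mm_space S dX mX" and "mm_space T dY mY"
    and "1 \<le> p"
    and "0 < \<kappa>" and "\<kappa> < 1" and "0 < \<kappa>'" and "\<kappa>' < 1/2"
  shows "obs_diam (S \<times> T) (prod_dist_p p dX dY) (mX \<Otimes>\<^sub>M mY) (\<kappa> + \<kappa>')
           \<le> obs_diam S dX mX \<kappa> + 2 * obs_diam T dY mY \<kappa>'"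
proof (cases "obs_diam S dX mX \<kappa> = \<top> \<or> obs_diam T dY mY \<kappa>' = \<top>")
  case True
  then show ?thesis by (auto simp: ennreal_mult_top)
next
  case False
  then obtain a b where a: "obs_diam S dX mX \<kappa> = ennreal a" "0 \<le> a"
    and b: "obs_diam T dY mY \<kappa>' = ennreal b" "0 \<le> b"
    by (metis ennreal_cases)
  show ?thesis
  proof (rule ennreal_le_epsilon)
    fix \<epsilon> :: real assume "0 < \<epsilon>"
    have "obs_diam (S \<times> T) (prod_dist_p p dX dY) (mX \<Otimes>\<^sub>M mY) (\<kappa> + \<kappa>')
        \<le> ennreal ((a + \<epsilon>/3) + 2 * (b + \<epsilon>/3))"
      using assms(4-7) \<open>0 < \<epsilon>\<close> a b
      by (intro obs_diam_product_le[OF assms(1-3)]) (simp_all add: ennreal_less_iff)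
    also have "\<dots> = obs_diam S dX mX \<kappa> + 2 * obs_diam T dY mY \<kappa>' + ennreal \<epsilon>"
      using a b \<open>0 < \<epsilon>\<close>
      by (simp add: ennreal_mult ennreal_numeral[symmetric] del: ennreal_numeral)
    finally show "obs_diam (S \<times> T) (prod_dist_p p dX dY) (mX \<Otimes>\<^sub>M mY) (\<kappa> + \<kappa>')
        \<le> obs_diam S dX mX \<kappa> + 2 * obs_diam T dY mY \<kappa>' + ennreal \<epsilon>" .
  qed
qed

end
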